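(* Let $E_1,\dots,E_N$ be a symmetric sequence of events with correlation functions $G_k$. Then for every $k$ with $2\le k\le N$ and all $r_2,\dots,r_k\in\{0,1\}$, $$G_k(1,r_2,\dots,r_k)=-G_k(0,r_2,\dots,r_k).$$
   Context: $\mathbbm{1}_E$ is the indicator function of an event $E$. A finite sequence of events $E_1,\dots,E_N$ on a common probability space is called symmetric if for all $r_1,\dots,r_N\in\{0,1\}$ and all permutations $\sigma$ of $\{1,\dots,N\}$, $P(\mathbbm{1}_{E_1}=r_1,\dots,\mathbbm{1}_{E_N}=r_N)=P(\mathbbm{1}_{E_1}=r_{\sigma(1)},\dots,\mathbbm{1}_{E_N}=r_{\sigma(N)})$. For $1\le k\le N$ the probability function of order $k$ is $P_k(r_1,\dots,r_k):=\sum_{r_{k+1},\dots,r_N\in\{0,1\}}P(\mathbbm{1}_{E_1}=r_1,\dots,\mathbbm{1}_{E_N}=r_N)$. The correlation functions $G_k:\{0,1\}^k\to\mathbb{R}$ are defined by $G_1:=P_1$ and, recursively for $1<k\le N$, $$G_k(r_1,\dots,r_k):=P_k(r_1,\dots,r_k)-\sum_{\sigma}\sum_{l=1}^{k-1}\frac{1}{(l-1)!\,(k-l)!}G_l(r_1,r_{\sigma(2)},\dots,r_{\sigma(l)})\,P_{k-l}(r_{\sigma(l+1)},\dots,r_{\sigma(k)}),$$ where $\sigma$ runs over all permutations of $\{2,\dots,k\}$. *)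

theory Defs
  imports "HOL-Probability.Probability"
begin

text \<open>Events are indexed 0,...,N-1 (paper: 1,...,N). Value vectors (r_1,...,r_k) are
  lists of naturals with entries in {0,1}.\<close>

definition joint_prob :: "'a measure \<Rightarrow> (nat \<Rightarrow> 'a set) \<Rightarrow> nat list \<Rightarrow> real" where
  "joint_prob M E rs =
     measure M {\<omega> \<in> space M. \<forall>i<length rs. indicator (E i) \<omega> = real (rs ! i)}"

definition symmetric_events :: "'a measure \<Rightarrow> (nat \<Rightarrow> 'a set) \<Rightarrow> nat \<Rightarrow> bool" where
  "symmetric_events M E N \<longleftrightarrow>
     (\<forall>rs \<sigma>. length rs = N \<longrightarrow> set rs \<subseteq> {0,1} \<longrightarrow> \<sigma> permutes {..<N} \<longrightarrow>
        joint_prob M E rs = joint_prob M E (map (\<lambda>i. rs ! \<sigma> i) [0..<N]))"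

definition prob_fun :: "'a measure \<Rightarrow> (nat \<Rightarrow> 'a set) \<Rightarrow> nat \<Rightarrow> nat \<Rightarrow> nat list \<Rightarrow> real" where
  "prob_fun M E N k rs =
     (\<Sum>ts\<in>{ts. length ts = N - k \<and> set ts \<subseteq> {0,1}}. joint_prob M E (rs @ ts))"

text \<open>Correlation functions G_k (argument list of length k). Permutations of {2..k}
  become permutations of the 0-based positions {1..<k}.\<close>
function corr_fun :: "'a measure \<Rightarrow> (nat \<Rightarrow> 'a set) \<Rightarrow> nat \<Rightarrow> nat \<Rightarrow> nat list \<Rightarrow> real" where
  "corr_fun M E N k rs =
     (if k \<le> 1 then prob_fun M E N 1 rs
      else prob_fun M E N k rs -
        (\<Sum>\<sigma>\<in>{\<sigma>. \<sigma> permutes {1..<k}}. \<Sum>l\<in>{1..<k}.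
           (1 / (fact (l - 1) * fact (k - l))) *
           corr_fun M E N l (rs ! 0 # map (\<lambda>i. rs ! \<sigma> i) [1..<l]) *
           prob_fun M E N (k - l) (map (\<lambda>i. rs ! \<sigma> i) [l..<k])))"
  by pat_completeness auto
termination
  by (relation "Wellfounded.measure (\<lambda>(M, E, N, k, rs). k)") auto

end

theory Submission
  imports Defs
begin

text \<open>Write \<open>S_k(r\<^sub>2,\<dots>,r\<^sub>k) = G_k(1,r\<^sub>2,\<dots>,r\<^sub>k) + G_k(0,r\<^sub>2,\<dots>,r\<^sub>k)\<close>. The defining recursion
  is linear in the \<open>G_l\<close>-factor, whose first argument is always \<open>r\<^sub>1\<close>, so \<open>S_k\<close> satisfies the same
  recursion with \<open>S_l\<close> in place of \<open>G_l\<close>. By induction every \<open>S_l\<close> with \<open>l \<ge> 2\<close> vanishes, and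
  \<open>S_1 = P(E\<^sub>1) + P(not E\<^sub>1) = 1\<close>. Only the \<open>l = 1\<close> terms survive; by symmetry each equals
  \<open>P_{k-1}(r\<^sub>2,\<dots>,r\<^sub>k) / (k-1)!\<close>, and there are \<open>(k-1)!\<close> permutations. Their sum cancels
  \<open>P_k(1,r\<^sub>2,\<dots>) + P_k(0,r\<^sub>2,\<dots>) = P_{k-1}(r\<^sub>2,\<dots>,r\<^sub>k)\<close>, so \<open>S_k = 0\<close>.\<close>

locale event_sequence = prob_space M for M :: "'a measure" +
  fixes E :: "nat \<Rightarrow> 'a set" and N :: nat
  assumes sets_E: "i < N \<Longrightarrow> E i \<in> sets M"

locale symmetric_event_sequence = event_sequence +
  assumes symmetric: "symmetric_events M E N"

context event_sequence
begin

lemma joint_event_in_sets: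
  assumes "length xs \<le> N"
  shows "{\<omega> \<in> space M. \<forall>i<length xs. indicator (E i) \<omega> = real (xs ! i)} \<in> sets M"
proof -
  have "\<And>i. i < length xs \<Longrightarrow> E i \<in> sets M"
    using assms sets_E by auto
  then show ?thesis by measurable
qed

lemma joint_prob_Nil: "joint_prob M E [] = 1"
  by (simp add: joint_prob_def prob_space)

lemma joint_prob_snoc_0_add_snoc_1:
  assumes "length xs < N"
  shows "joint_prob M E (xs @ [0]) + joint_prob M E (xs @ [1]) = joint_prob M E xs"
proof -
  define A where "A = {\<omega> \<in> space M. \<forall>i<length xs. indicator (E i) \<omega> = real (xs ! i)}"
  let ?F = "E (length xs)"
  have A: "A \<in> sets M" and F: "?F \<in> sets M"
    using joint_event_in_sets[of xs] sets_E assms by (auto simp: A_def)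
  have "{\<omega> \<in> space M. \<forall>i<length (xs @ [0]). indicator (E i) \<omega> = real ((xs @ [0]) ! i)} = A - ?F"
    and "{\<omega> \<in> space M. \<forall>i<length (xs @ [1]). indicator (E i) \<omega> = real ((xs @ [1]) ! i)} = A \<inter> ?F"
    by (auto simp: A_def nth_append less_Suc_eq indicator_def split: if_splits)
  moreover have "(A - ?F) \<inter> (A \<inter> ?F) = {}"
    by blast
  then have "measure M A = measure M (A - ?F) + measure M (A \<inter> ?F)"
    using finite_measure_Union[of "A - ?F" "A \<inter> ?F"] A F by (simp add: Un_Diff_Int)
  ultimately show ?thesis
    by (simp add: joint_prob_def A_def)
qed

lemma sum_joint_prob_append:
  assumes "length xs + n \<le> N"
  shows "(\<Sum>ts\<in>{ts. length ts = n \<and> set ts \<subseteq> {0,1}}. joint_prob M E (xs @ ts)) = joint_prob M E xs"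
  using assms
proof (induction n arbitrary: xs)
  case 0
  have "{ts::nat list. length ts = 0 \<and> set ts \<subseteq> {0,1}} = {[]}" by auto
  then show ?case by simp
next
  case (Suc n)
  let ?L = "{ts. length ts = n \<and> set ts \<subseteq> {0::nat,1}}"
  have "{ts. length ts = Suc n \<and> set ts \<subseteq> {0,1}} = (\<lambda>(t, ts). t # ts) ` ({0,1} \<times> ?L)"
    by (auto simp: length_Suc_conv image_iff)
  then have "(\<Sum>ts\<in>{ts. length ts = Suc n \<and> set ts \<subseteq> {0,1}}. joint_prob M E (xs @ ts))
      = (\<Sum>t\<in>{0::nat,1}. \<Sum>ts\<in>?L. joint_prob M E ((xs @ [t]) @ ts))"
    by (simp add: sum.reindex inj_on_def sum.cartesian_product case_prod_beta)
  also have "\<dots> = (\<Sum>t\<in>{0::nat,1}. joint_prob M E (xs @ [t]))"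
    using Suc by (intro sum.cong refl Suc.IH) auto
  also have "\<dots> = joint_prob M E xs"
    using joint_prob_snoc_0_add_snoc_1[of xs] Suc.prems by simp
  finally show ?case .
qed

lemma prob_fun_eq_joint_prob:
  assumes "length xs = k" "k \<le> N"
  shows "prob_fun M E N k xs = joint_prob M E xs"
  unfolding prob_fun_def using sum_joint_prob_append[of xs "N - k"] assms by simp

lemma corr_fun_1_singleton_add:
  assumes "0 < N"
  shows "corr_fun M E N 1 [1] + corr_fun M E N 1 [0] = 1"
  using joint_prob_snoc_0_add_snoc_1[of "[]"] assms
  by (simp add: prob_fun_eq_joint_prob joint_prob_Nil)

end

context symmetric_event_sequence
begin

lemma joint_prob_mset_eq:
  assumes "length xs \<le> N" "set xs \<subseteq> {0,1}" "mset ys = mset xs"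
  shows "joint_prob M E ys = joint_prob M E xs"
proof -
  have full: "joint_prob M E zs' = joint_prob M E zs"
    if zs: "length zs = N" "set zs \<subseteq> {0,1}" "mset zs' = mset zs" for zs zs'
  proof -
    obtain p where p: "p permutes {..<length zs}" "permute_list p zs = zs'"
      using mset_eq_permutation[OF zs(3)] by blast
    have "joint_prob M E zs = joint_prob M E (map (\<lambda>i. zs ! p i) [0..<N])"
      using symmetric zs(1,2) p(1) unfolding symmetric_events_def by auto
    also have "map (\<lambda>i. zs ! p i) [0..<N] = zs'"
      using p(2) zs(1) by (simp add: permute_list_def)
    finally show ?thesis by simp
  qed
  have "length ys = length xs"
    using assms(3) by (metis size_mset)
  \<comment> \<open>Pad both lists with the same tail to full length \<open>N\<close> and marginalise it out again.\<close>
  then have "joint_prob M E ys = prob_fun M E N (length xs) ys"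
    using prob_fun_eq_joint_prob[of ys "length xs"] assms(1) by simp
  also have "\<dots> = prob_fun M E N (length xs) xs"
    unfolding prob_fun_def by (intro sum.cong refl full) (use assms in auto)
  also have "\<dots> = joint_prob M E xs"
    using prob_fun_eq_joint_prob assms(1) by simp
  finally show ?thesis .
qed

lemma prob_fun_Cons_1_add_Cons_0:
  assumes "length rs < N" "set rs \<subseteq> {0,1}"
  shows "prob_fun M E N (Suc (length rs)) (1 # rs) + prob_fun M E N (Suc (length rs)) (0 # rs)
    = joint_prob M E rs"
proof -
  have "prob_fun M E N (Suc (length rs)) (r # rs) = joint_prob M E (rs @ [r])" if "r \<in> {0,1}" for r
    using prob_fun_eq_joint_prob[of "r # rs"] joint_prob_mset_eq[of "rs @ [r]" "r # rs"] assms that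
    by auto
  then show ?thesis
    using joint_prob_snoc_0_add_snoc_1[OF assms(1)] by simp
qed

end

text \<open>For \<open>\<sigma>\<close> permuting
  \<open>{1..<k}\<close> and \<open>a \<ge> 1\<close> these never touch the head \<open>r\<close>, which is dropped by the shift \<open>\<sigma> i - 1\<close>.\<close>
definition permuted_slice :: "nat list \<Rightarrow> (nat \<Rightarrow> nat) \<Rightarrow> nat \<Rightarrow> nat \<Rightarrow> nat list" where
  "permuted_slice rs \<sigma> a b = map (\<lambda>i. rs ! (\<sigma> i - 1)) [a..<b]"

lemma corr_fun_Cons:
  assumes "2 \<le> k"
  shows "corr_fun M E N k (r # rs) = prob_fun M E N k (r # rs) -
     (\<Sum>\<sigma>\<in>{\<sigma>. \<sigma> permutes {1..<k}}. \<Sum>l\<in>{1..<k}.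
        1 / (fact (l - 1) * fact (k - l)) * corr_fun M E N l (r # permuted_slice rs \<sigma> 1 l) *
        prob_fun M E N (k - l) (permuted_slice rs \<sigma> l k))"
proof -
  have slice: "map (\<lambda>i. (r # rs) ! \<sigma> i) [a..<b] = permuted_slice rs \<sigma> a b"
    if "\<sigma> permutes {1..<k}" "1 \<le> a" "b \<le> k" for \<sigma> a b
  proof -
    have "(r # rs) ! \<sigma> i = rs ! (\<sigma> i - 1)" if "i \<in> {a..<b}" for i
      using permutes_in_image[OF \<open>\<sigma> permutes _\<close>, of i] that \<open>1 \<le> a\<close> \<open>b \<le> k\<close>
      by (simp add: nth_Cons')
    then show ?thesis
      unfolding permuted_slice_def by (intro map_cong) auto
  qed
  show ?thesis
    using assms
    by (subst corr_fun.simps) (auto simp del: corr_fun.simps simp: slice intro!: sum.cong)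
qed

declare corr_fun.simps [simp del]

lemma corr_fun_Cons_1_add_Cons_0_eq:
  assumes "2 \<le> k"
  shows "corr_fun M E N k (1 # rs) + corr_fun M E N k (0 # rs) =
     (prob_fun M E N k (1 # rs) + prob_fun M E N k (0 # rs)) -
     (\<Sum>\<sigma>\<in>{\<sigma>. \<sigma> permutes {1..<k}}. \<Sum>l\<in>{1..<k}.
        1 / (fact (l - 1) * fact (k - l)) *
        (corr_fun M E N l (1 # permuted_slice rs \<sigma> 1 l) + corr_fun M E N l (0 # permuted_slice rs \<sigma> 1 l)) *
        prob_fun M E N (k - l) (permuted_slice rs \<sigma> l k))"
  unfolding corr_fun_Cons[OF assms] by (simp add: algebra_simps sum.distrib)

lemma set_permuted_slice:
  assumes "\<sigma> permutes {1..<k}" "1 \<le> a" "b \<le> k" "length rs = k - 1"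
  shows "set (permuted_slice rs \<sigma> a b) \<subseteq> set rs"
proof -
  have "rs ! (\<sigma> i - 1) \<in> set rs" if "i \<in> {a..<b}" for i
  proof -
    have "\<sigma> i \<in> {1..<k}"
      using permutes_in_image[OF assms(1), of i] that assms(2,3) by simp
    then show ?thesis
      using assms(4) by (intro nth_mem) auto
  qed
  then show ?thesis
    by (auto simp: permuted_slice_def)
qed

lemma mset_permuted_slice:
  assumes "\<sigma> permutes {1..<k}" "length rs = k - 1"
  shows "mset (permuted_slice rs \<sigma> 1 k) = mset rs"
proof -
  have "mset (permuted_slice rs \<sigma> 1 k) = image_mset (\<lambda>j. rs ! (j - 1)) (mset (map \<sigma> [1..<k]))"
    by (simp only: permuted_slice_def mset_map image_mset.compositionality o_def)
  also have "mset (map \<sigma> [1..<k]) = mset [1..<k]"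
    using permutes_image_mset[OF assms(1)] by simp
  also have "image_mset (\<lambda>j. rs ! (j - 1)) (mset [1..<k]) = mset (map (\<lambda>j. rs ! (j - 1)) [1..<k])"
    by (simp only: mset_map)
  also have "map (\<lambda>j. rs ! (j - 1)) [1..<k] = rs"
    using assms(2) by (intro nth_equalityI) auto
  finally show ?thesis .
qed

lemma (in symmetric_event_sequence) corr_fun_Cons_1_add_Cons_0:
  assumes "2 \<le> k" "k \<le> N" "length rs = k - 1" "set rs \<subseteq> {0,1}"
  shows "corr_fun M E N k (1 # rs) + corr_fun M E N k (0 # rs) = 0"
  using assms
proof (induction k arbitrary: rs rule: less_induct)
  case (less k)
  let ?S = "\<lambda>l xs. corr_fun M E N l (1 # xs) + corr_fun M E N l (0 # xs)"
  let ?term = "\<lambda>\<sigma> l. 1 / (fact (l - 1) * fact (k - l)) * ?S l (permuted_slice rs \<sigma> 1 l) *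
     prob_fun M E N (k - l) (permuted_slice rs \<sigma> l k)"
  have inner: "(\<Sum>l\<in>{1..<k}. ?term \<sigma> l) = joint_prob M E rs / fact (k - 1)"
    if \<sigma>: "\<sigma> permutes {1..<k}" for \<sigma>
  proof -
    have "?term \<sigma> l = 0" if "l \<in> {2..<k}" for l
      using less.IH[of l "permuted_slice rs \<sigma> 1 l"] that less.prems
        set_permuted_slice[OF \<sigma>, of 1 l rs]
      by (auto simp: permuted_slice_def)
    then have "(\<Sum>l\<in>{2..<k}. ?term \<sigma> l) = 0"
      by (intro sum.neutral) blast
    moreover have "(\<Sum>l\<in>{1..<k}. ?term \<sigma> l) = ?term \<sigma> 1 + (\<Sum>l\<in>{2..<k}. ?term \<sigma> l)"
      using less.prems(1) by (subst sum.atLeast_Suc_lessThan) (simp_all add: numeral_2_eq_2)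
    ultimately have "(\<Sum>l\<in>{1..<k}. ?term \<sigma> l) = ?term \<sigma> 1"
      by simp
    also have "?S 1 (permuted_slice rs \<sigma> 1 1) = 1"
      using corr_fun_1_singleton_add less.prems by (simp add: permuted_slice_def)
    also have "prob_fun M E N (k - 1) (permuted_slice rs \<sigma> 1 k) = joint_prob M E (permuted_slice rs \<sigma> 1 k)"
      using prob_fun_eq_joint_prob[of "permuted_slice rs \<sigma> 1 k" "k - 1"] less.prems
      by (simp add: permuted_slice_def)
    also have "\<dots> = joint_prob M E rs"
      using joint_prob_mset_eq[OF _ _ mset_permuted_slice[OF \<sigma> less.prems(3)]] less.prems by simp
    finally show ?thesis by simp
  qed
  have "(\<Sum>\<sigma>\<in>{\<sigma>. \<sigma> permutes {1..<k}}. \<Sum>l\<in>{1..<k}. ?term \<sigma> l) = joint_prob M E rs"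
    using inner card_permutations[of "{1..<k}" "k - 1"] by simp
  moreover have "prob_fun M E N k (1 # rs) + prob_fun M E N k (0 # rs) = joint_prob M E rs"
    using prob_fun_Cons_1_add_Cons_0[of rs] less.prems by simp
  ultimately show ?case
    using corr_fun_Cons_1_add_Cons_0_eq[OF less.prems(1), of M E N rs] by simp
qed

theorem mainTheorem4:
  fixes M :: "'a measure" and E :: "nat \<Rightarrow> 'a set" and N k :: nat and rs :: "nat list"
  assumes "prob_space M"
    and "\<And>i. i < N \<Longrightarrow> E i \<in> sets M"
    and "symmetric_events M E N"
    and "2 \<le> k" and "k \<le> N"
    and "length rs = k - 1" and "set rs \<subseteq> {0,1}"
  shows "corr_fun M E N k (1 # rs) = - corr_fun M E N k (0 # rs)"
proof -
  interpret symmetric_event_sequence M E N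
    using assms(1-3) by (simp add: symmetric_event_sequence_def event_sequence_def
        event_sequence_axioms_def symmetric_event_sequence_axioms_def)
  show ?thesis
    using corr_fun_Cons_1_add_Cons_0 assms(4-7) by (simp add: eq_neg_iff_add_eq_0)
qed

end
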